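(* Let $(R,B)$ be an EIC problem with problem graph $G$, and let $\mathscr N$ be the set of all neighborhood partitions. Then $$(T)_{(R,B)}\le \min_{(\tilde N_1,\dots,\tilde N_n)\in\mathscr N}\ \sum_{i=1}^n \chi\big(\overline{G|_{\tilde N_i}}\big).$$
   Context: An EIC problem is a pair $(R,B)$ of matrices in $\mathbb{F}_2^{n\times m}$ with disjoint supports (node $u$ needs block $a$ iff $R_{ua}=1$, has it iff $B_{ua}=1$). $P=\{(u,a):R_{ua}=1\}$. The problem graph $G=(V,E)$ has vertices $V=\{v_{(u,a)}:(u,a)\in P\}$ and a directed edge from $v_{(u,a)}$ to $v_{(w,b)}$ iff $B_{ub}=1$ or $a=b$; $G|_S$ denotes the induced subgraph on $S\subseteq V$. Sender neighborhood of node $k$: $N_k=\{v_{(w,b)}\in V:B_{kb}=1\}$. A neighborhood partition is a tuple $(\tilde N_1,\dots,\tilde N_n)$ with $\tilde N_i\subseteq N_i$, pairwise disjoint, union $V$. For a directed graph $H$ (loops disregarded), $\overline H$ has an edge $(x,y)$, $x\ne y$, iff $(x,y)$ is not an edge of $H$; an independent set contains no edge in either direction; $\chi(H)$ is the minimum number of independent sets partitioning the vertices ($0$ for the empty graph). A linear broadcast solution to $(R,B)$ is a tuple $\beta^{(1)},\dots,\beta^{(n)}$, $\beta^{(u)}\in\mathbb{F}_2^{h_u\times m}$, with the $a$-th column of $\beta^{(u)}$ zero whenever $B_{ua}=0$, and for each $(u,a)\in P$, the standard basis vector $\boldsymbol e_a$ lies in the $\mathbb{F}_2$-row span of all $\beta^{(\ell)}$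 together with $\mathrm{diag}(B_u)$ (the diagonal matrix with the $u$-th row of $B$ on its diagonal). It is task-based if for every $(u,a)\in P$ there is $\ell$ with $\boldsymbol e_a$ in the row span of $\beta^{(\ell)}$ together with $\mathrm{diag}(B_u)$. Its length is $\sum_u h_u$; $(T)_{(R,B)}$ is the minimum length of a task-based solution. *)

theory Defs
  imports Main "HOL-Library.Z2" "HOL-Library.Extended_Nat"
begin

text \<open>An n x m matrix over F2 is a function nat => nat => bit,
  of which only entries (u,a) with u < n, a < m matter. A matrix with h rows and
  m columns is a list of h row vectors (nat => bit), of which only entries j < m matter.\<close>

type_synonym f2vec = "nat \<Rightarrow> bit"
type_synonym f2mat = "nat \<Rightarrow> nat \<Rightarrow> bit"

definition EIC_problem :: "nat \<Rightarrow> nat \<Rightarrow> f2mat \<Rightarrow> f2mat \<Rightarrow> bool" where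
  "EIC_problem n m R B \<longleftrightarrow> (\<forall>u<n. \<forall>a<m. \<not> (R u a = 1 \<and> B u a = 1))"

definition demands :: "nat \<Rightarrow> nat \<Rightarrow> f2mat \<Rightarrow> (nat \<times> nat) set" where
  "demands n m R = {(u, a). u < n \<and> a < m \<and> R u a = 1}"

definition G_edge :: "f2mat \<Rightarrow> nat \<times> nat \<Rightarrow> nat \<times> nat \<Rightarrow> bool" where
  "G_edge B x y \<longleftrightarrow> (case x of (u, a) \<Rightarrow> case y of (w, b) \<Rightarrow> B u b = 1 \<or> a = b)"

definition compl_induced_edge :: "('v \<Rightarrow> 'v \<Rightarrow> bool) \<Rightarrow> 'v set \<Rightarrow> 'v \<Rightarrow> 'v \<Rightarrow> bool" where
  "compl_induced_edge E S x y \<longleftrightarrow> x \<in> S \<and> y \<in> S \<and> x \<noteq> y \<and> \<not> E x y"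

definition independent :: "('v \<Rightarrow> 'v \<Rightarrow> bool) \<Rightarrow> 'v set \<Rightarrow> bool" where
  "independent E C \<longleftrightarrow> (\<forall>x\<in>C. \<forall>y\<in>C. \<not> E x y \<and> \<not> E y x)"

definition chi :: "'v set \<Rightarrow> ('v \<Rightarrow> 'v \<Rightarrow> bool) \<Rightarrow> nat" where
  "chi S E = (LEAST k. \<exists>Cs :: 'v set list. length Cs = k
      \<and> (\<forall>i<k. \<forall>j<k. i \<noteq> j \<longrightarrow> Cs ! i \<inter> Cs ! j = {})
      \<and> \<Union> (set Cs) = S \<and> (\<forall>C\<in>set Cs. independent E C))"

definition sender_nbhd :: "nat \<Rightarrow> nat \<Rightarrow> f2mat \<Rightarrow> f2mat \<Rightarrow> nat \<Rightarrow> (nat \<times> nat) set" where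
  "sender_nbhd n m R B k = {(w, b) \<in> demands n m R. B k b = 1}"

definition nbhd_partition :: "nat \<Rightarrow> nat \<Rightarrow> f2mat \<Rightarrow> f2mat \<Rightarrow> (nat \<Rightarrow> (nat \<times> nat) set) \<Rightarrow> bool" where
  "nbhd_partition n m R B N' \<longleftrightarrow>
     (\<forall>i<n. N' i \<subseteq> sender_nbhd n m R B i)
     \<and> (\<forall>i<n. \<forall>j<n. i \<noteq> j \<longrightarrow> N' i \<inter> N' j = {})
     \<and> (\<Union>i<n. N' i) = demands n m R"

definition in_row_span :: "nat \<Rightarrow> f2vec list \<Rightarrow> f2vec \<Rightarrow> bool" where
  "in_row_span m rows v \<longleftrightarrow>
     (\<exists>c :: nat \<Rightarrow> bit. \<forall>j<m. v j = (\<Sum>i<length rows. c i * (rows ! i) j))"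

definition unit_vec :: "nat \<Rightarrow> f2vec" where
  "unit_vec a = (\<lambda>j. if j = a then 1 else 0)"

definition diag_rows :: "nat \<Rightarrow> f2mat \<Rightarrow> nat \<Rightarrow> f2vec list" where
  "diag_rows m B u = map (\<lambda>j. \<lambda>k. if k = j then B u j else 0) [0..<m]"

text \<open>beta u is the list of rows of beta^(u) (so h_u = length (beta u)).\<close>
definition lin_broadcast_sol :: "nat \<Rightarrow> nat \<Rightarrow> f2mat \<Rightarrow> f2mat \<Rightarrow> (nat \<Rightarrow> f2vec list) \<Rightarrow> bool" where
  "lin_broadcast_sol n m R B beta \<longleftrightarrow>
     (\<forall>u<n. \<forall>r\<in>set (beta u). \<forall>a<m. B u a = 0 \<longrightarrow> r a = 0)
     \<and> (\<forall>(u, a)\<in>demands n m R.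
          in_row_span m (concat (map beta [0..<n]) @ diag_rows m B u) (unit_vec a))"

definition task_based :: "nat \<Rightarrow> nat \<Rightarrow> f2mat \<Rightarrow> f2mat \<Rightarrow> (nat \<Rightarrow> f2vec list) \<Rightarrow> bool" where
  "task_based n m R B beta \<longleftrightarrow>
     (\<forall>(u, a)\<in>demands n m R. \<exists>l<n. in_row_span m (beta l @ diag_rows m B u) (unit_vec a))"

definition sol_length :: "nat \<Rightarrow> (nat \<Rightarrow> f2vec list) \<Rightarrow> nat" where
  "sol_length n beta = (\<Sum>u<n. length (beta u))"

text \<open>(T)_(R,B): minimum length of a task-based linear broadcast solution (infinity if none).\<close>
definition T_opt :: "nat \<Rightarrow> nat \<Rightarrow> f2mat \<Rightarrow> f2mat \<Rightarrow> enat" where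
  "T_opt n m R B = (INF beta \<in> {beta. lin_broadcast_sol n m R B beta \<and> task_based n m R B beta}.
                       enat (sol_length n beta))"

end

theory Submission
  imports Defs
begin

text \<open>Colour each part \<open>N' i\<close> optimally with independent sets of the complement of the
  induced problem graph, i.e. with cliques of \<open>G\<close>, and let sender \<open>i\<close> broadcast, for each
  clique \<open>C\<close>, the sum of the blocks demanded in \<open>C\<close>. A receiver \<open>u\<close> demanding \<open>a\<close> in \<open>C\<close> has
  every other block of that sum as side information, since \<open>(u, a)\<close> is adjacent in \<open>G\<close> to every
  other vertex of \<open>C\<close>, and the sender holds all of them because \<open>C \<subseteq> N' i \<subseteq> N i\<close>. This gives a
  task-based solution of length \<open>\<Sum>i. \<chi>\<close>.\<close>

lemma in_row_span_row_plus_diag_rows: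
  fixes rows :: "f2vec list" and S :: "nat \<Rightarrow> bool"
  assumes r: "r \<in> set rows"
    and v: "\<And>j. j < m \<Longrightarrow> v j = r j + (if S j then B u j else 0)"
  shows "in_row_span m (rows @ diag_rows m B u) v"
proof -
  let ?L = "length rows"
  let ?R = "rows @ diag_rows m B u"
  obtain p where p: "p < ?L" "rows ! p = r" using r by (meson in_set_conv_nth)
  define c :: "nat \<Rightarrow> bit" where
    "c i = (if i = p then 1 else if ?L \<le> i \<and> S (i - ?L) then 1 else 0)" for i
  have "v j = (\<Sum>i<length ?R. c i * (?R ! i) j)" if j: "j < m" for j
  proof -
    have rows_part: "(\<Sum>i<?L. c i * (?R ! i) j) = r j"
    proof -
      have "(\<Sum>i<?L. c i * (?R ! i) j) = (\<Sum>i<?L. if i = p then r j else 0)"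
        by (rule sum.cong) (auto simp: c_def nth_append p)
      then show ?thesis using p by simp
    qed
    have diag_part: "(\<Sum>i\<in>{?L..<?L+m}. c i * (?R ! i) j) = (if S j then B u j else 0)"
    proof -
      have "(\<Sum>i\<in>{?L..<?L+m}. c i * (?R ! i) j) = (\<Sum>k<m. c (k + ?L) * (?R ! (k + ?L)) j)"
        by (rule sum.reindex_bij_witness[of _ "\<lambda>k. k + ?L" "\<lambda>i. i - ?L"]) auto
      also have "\<dots> = (\<Sum>k<m. if k = j then (if S j then B u j else 0) else 0)"
        by (rule sum.cong) (use p in \<open>auto simp: c_def nth_append diag_rows_def\<close>)
      finally show ?thesis using j by simp
    qed
    have "length ?R = ?L + m" by (simp add: diag_rows_def)
    then have "(\<Sum>i<length ?R. c i * (?R ! i) j)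
        = (\<Sum>i<?L. c i * (?R ! i) j) + (\<Sum>i\<in>{?L..<?L+m}. c i * (?R ! i) j)"
      unfolding lessThan_atLeast0 by (simp only:) (rule sum.atLeastLessThan_concat[symmetric], auto)
    then show ?thesis using rows_part diag_part v[OF j] by simp
  qed
  then show ?thesis unfolding in_row_span_def by blast
qed

definition is_colouring :: "'v set \<Rightarrow> ('v \<Rightarrow> 'v \<Rightarrow> bool) \<Rightarrow> nat \<Rightarrow> 'v set list \<Rightarrow> bool" where
  "is_colouring S E k Cs \<longleftrightarrow> length Cs = k
      \<and> (\<forall>i<k. \<forall>j<k. i \<noteq> j \<longrightarrow> Cs ! i \<inter> Cs ! j = {})
      \<and> \<Union> (set Cs) = S \<and> (\<forall>C\<in>set Cs. independent E C)"

lemma is_colouringD: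
  assumes "is_colouring S E k Cs"
  shows "length Cs = k" "\<Union> (set Cs) = S" "C \<in> set Cs \<Longrightarrow> independent E C"
  using assms by (simp_all add: is_colouring_def)

lemma chi_colouring_exists:
  assumes "finite S" and irrefl: "\<And>x. \<not> E x x"
  shows "\<exists>Cs. is_colouring S E (chi S E) Cs"
proof -
  obtain xs where xs: "set xs = S" "distinct xs" using assms(1) finite_distinct_list by blast
  have "is_colouring S E (length xs) (map (\<lambda>x. {x}) xs)"
  proof -
    have "\<forall>i<length xs. \<forall>j<length xs. i \<noteq> j \<longrightarrow> {xs ! i} \<inter> {xs ! j} = {}"
      using xs(2) by (auto simp: nth_eq_iff_index_eq)
    moreover have "\<Union> (set (map (\<lambda>x. {x}) xs)) = S" using xs(1) by auto
    moreover have "independent E {x}" for x using irrefl by (simp add: independent_def)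
    ultimately show ?thesis unfolding is_colouring_def by auto
  qed
  then have "\<exists>k Cs. is_colouring S E k Cs" by blast
  then have "\<exists>Cs. is_colouring S E (LEAST k. \<exists>Cs. is_colouring S E k Cs) Cs"
    by (rule LeastI_ex)
  then show ?thesis unfolding chi_def is_colouring_def by simp
qed

lemma adjacent_if_independent_compl_induced:
  assumes "independent (compl_induced_edge E S) C" "C \<subseteq> S" "x \<in> C" "y \<in> C" "x \<noteq> y"
  shows "E x y"
  using assms unfolding independent_def compl_induced_edge_def by blast

definition block_indicator :: "(nat \<times> nat) set \<Rightarrow> f2vec" where
  "block_indicator C = (\<lambda>j. if \<exists>w. (w, j) \<in> C then 1 else 0)"

lemma block_indicator_zero_outside_sender:
  assumes "C \<subseteq> sender_nbhd n m R B u" "B u a = 0"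
  shows "block_indicator C a = 0"
  using assms by (auto simp: block_indicator_def sender_nbhd_def)

lemma unit_vec_in_span_by_clique_indicator:
  assumes ind: "independent (compl_induced_edge (G_edge B) S) C" and "C \<subseteq> S"
    and ua: "(u, a) \<in> C" and row: "block_indicator C \<in> set rows"
  shows "in_row_span m (rows @ diag_rows m B u) (unit_vec a)"
proof (rule in_row_span_row_plus_diag_rows[OF row, where S = "\<lambda>j. j \<noteq> a \<and> (\<exists>w. (w, j) \<in> C)"])
  fix j
  show "unit_vec a j = block_indicator C j
      + (if j \<noteq> a \<and> (\<exists>w. (w, j) \<in> C) then B u j else 0)"
  proof (cases "j \<noteq> a \<and> (\<exists>w. (w, j) \<in> C)")
    case True
    then obtain w where "(w, j) \<in> C" "j \<noteq> a" by blast
    then have "G_edge B (u, a) (w, j)"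
      using adjacent_if_independent_compl_induced[OF ind \<open>C \<subseteq> S\<close> ua] by blast
    then have "B u j = 1" using \<open>j \<noteq> a\<close> unfolding G_edge_def by auto
    then show ?thesis using True by (simp add: unit_vec_def block_indicator_def)
  qed (use ua in \<open>auto simp: unit_vec_def block_indicator_def\<close>)
qed

lemma finite_demands: "finite (demands n m R)"
  by (rule finite_subset[of _ "{..<n} \<times> {..<m}"]) (auto simp: demands_def)

lemma demand_in_colour_class:
  assumes P: "nbhd_partition n m R B N'"
    and Cs: "\<And>i. i < n \<Longrightarrow> is_colouring (N' i) (compl_induced_edge (G_edge B) (N' i)) (k i) (Cs i)"
    and ua: "(u, a) \<in> demands n m R"
  obtains l C where "l < n" "C \<in> set (Cs l)" "(u, a) \<in> C" "C \<subseteq> N' l"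
    "independent (compl_induced_edge (G_edge B) (N' l)) C"
proof -
  have "(\<Union>i<n. N' i) = demands n m R" using P unfolding nbhd_partition_def by blast
  then obtain l where l: "l < n" "(u, a) \<in> N' l" using ua by blast
  then obtain C where "C \<in> set (Cs l)" "(u, a) \<in> C"
    using is_colouringD(2)[OF Cs[OF l(1)]] by blast
  moreover have "C \<subseteq> N' l" "independent (compl_induced_edge (G_edge B) (N' l)) C"
    using is_colouringD(2,3)[OF Cs[OF l(1)]] calculation(1) by blast+
  ultimately show ?thesis using that l(1) by blast
qed

lemma task_based_block_indicators:
  assumes P: "nbhd_partition n m R B N'"
    and Cs: "\<And>i. i < n \<Longrightarrow> is_colouring (N' i) (compl_induced_edge (G_edge B) (N' i)) (k i) (Cs i)"
  shows "task_based n m R B (\<lambda>i. map block_indicator (Cs i))"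
proof -
  have "\<exists>l<n. in_row_span m (map block_indicator (Cs l) @ diag_rows m B u) (unit_vec a)"
    if ua: "(u, a) \<in> demands n m R" for u a
  proof -
    obtain l C where "l < n" "C \<in> set (Cs l)" "(u, a) \<in> C" "C \<subseteq> N' l"
      "independent (compl_induced_edge (G_edge B) (N' l)) C"
      using demand_in_colour_class[OF P Cs ua] by blast
    then show ?thesis using unit_vec_in_span_by_clique_indicator[of B "N' l" C] by auto
  qed
  then show ?thesis unfolding task_based_def by blast
qed

lemma lin_broadcast_sol_block_indicators:
  assumes P: "nbhd_partition n m R B N'"
    and Cs: "\<And>i. i < n \<Longrightarrow> is_colouring (N' i) (compl_induced_edge (G_edge B) (N' i)) (k i) (Cs i)"
  shows "lin_broadcast_sol n m R B (\<lambda>i. map block_indicator (Cs i))"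
proof -
  let ?beta = "\<lambda>i. map block_indicator (Cs i)"
  have "r a = 0" if u: "u < n" and "r \<in> set (?beta u)" "B u a = 0" for u r a
  proof -
    obtain C where C: "C \<in> set (Cs u)" "r = block_indicator C"
      using \<open>r \<in> set (?beta u)\<close> by auto
    have "C \<subseteq> N' u" using is_colouringD(2)[OF Cs[OF u]] C(1) by blast
    also have "N' u \<subseteq> sender_nbhd n m R B u" using P u unfolding nbhd_partition_def by blast
    finally show ?thesis using block_indicator_zero_outside_sender \<open>B u a = 0\<close> C(2) by blast
  qed
  moreover have "in_row_span m (concat (map ?beta [0..<n]) @ diag_rows m B u) (unit_vec a)"
    if ua: "(u, a) \<in> demands n m R" for u a
  proof -
    obtain l C where "l < n" "C \<in> set (Cs l)" "(u, a) \<in> C" "C \<subseteq> N' l"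
      "independent (compl_induced_edge (G_edge B) (N' l)) C"
      using demand_in_colour_class[OF P Cs ua] by blast
    moreover from this have "block_indicator C \<in> set (concat (map ?beta [0..<n]))" by auto
    ultimately show ?thesis using unit_vec_in_span_by_clique_indicator by blast
  qed
  ultimately show ?thesis unfolding lin_broadcast_sol_def by blast
qed

lemma T_opt_le_sum_chi:
  assumes P: "nbhd_partition n m R B N'"
  shows "T_opt n m R B \<le> enat (\<Sum>i<n. chi (N' i) (compl_induced_edge (G_edge B) (N' i)))"
proof -
  let ?E = "\<lambda>i. compl_induced_edge (G_edge B) (N' i)"
  let ?k = "\<lambda>i. chi (N' i) (?E i)"
  have "finite (N' i)" if "i < n" for i
  proof (rule finite_subset[OF _ finite_demands])
    show "N' i \<subseteq> demands n m R" using P that unfolding nbhd_partition_def by blast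
  qed
  then have colourable: "\<exists>Cs. is_colouring (N' i) (?E i) (?k i) Cs" if "i < n" for i
    using that by (intro chi_colouring_exists) (simp_all add: compl_induced_edge_def)
  define Cs where "Cs i = (SOME Cs. is_colouring (N' i) (?E i) (?k i) Cs)" for i
  have Cs: "is_colouring (N' i) (?E i) (?k i) (Cs i)" if "i < n" for i
    unfolding Cs_def using colourable[OF that] by (rule someI_ex)
  let ?beta = "\<lambda>i. map block_indicator (Cs i)"
  have "sol_length n ?beta = (\<Sum>i<n. ?k i)"
    unfolding sol_length_def using is_colouringD(1)[OF Cs] by simp
  moreover have "T_opt n m R B \<le> enat (sol_length n ?beta)"
    unfolding T_opt_def
    using lin_broadcast_sol_block_indicators[OF P Cs] task_based_block_indicators[OF P Cs]
    by (intro INF_lower) blast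
  ultimately show ?thesis by simp
qed

theorem lemma4:
  fixes n m :: nat and R B :: f2mat
  assumes "EIC_problem n m R B"
  shows "T_opt n m R B \<le>
    (INF N' \<in> {N'. nbhd_partition n m R B N'}.
       enat (\<Sum>i<n. chi (N' i) (compl_induced_edge (G_edge B) (N' i))))"
  using T_opt_le_sum_chi by (auto intro: INF_greatest)

end
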